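(* Let $d\in R$ be nonzero, let $k$ be a positive integer, and let $a_0,a_1,\ldots,a_k$ be a $d$-sequence of length $k$ for $S$. Let $f'\in\mathbb{K}[x]$ be a polynomial of degree $k'\le k$ that can be written as $f'=\tfrac{g'}{d'}$ with $g'\in R[x]$ and $d'\in R$ a nonzero divisor of $d$. Then $$f'\in\mathrm{Int}(S,R)\iff f'(a_i)\in R\ \text{ for all } 0\le i\le k'.$$
   Context: Let $R$ be a unique factorization domain with field of fractions $\mathbb{K}$, and let $S\subseteq R$ be a nonempty subset. Define $\mathrm{Int}(S,R)=\{f\in\mathbb{K}[x]: f(a)\in R \text{ for all } a\in S\}$. For an irreducible $\pi\in R$, $R_{(\pi)}$ denotes the localization of $R$ at the prime ideal $(\pi)$, $\mathrm{Int}(S,R_{(\pi)})=\{f\in\mathbb{K}[x]: f(a)\in R_{(\pi)} \text{ for all } a\in S\}$, and $v_\pi$ denotes the $\pi$-adic valuation. $\pi$-sequence: for an irreducible $\pi\in R$ and a positive integer $k$, a $\pi$-sequence of length $k$ in $S$ is a sequence $u_0,u_1,\ldots,u_k$ of distinct elements of $S$ such that for every $1\le m\le k$, $$\frac{(x-u_0)(x-u_1)\cdots(x-u_{m-1})}{(u_m-u_0)(u_m-u_1)\cdots(u_m-u_{m-1})}\in\mathrm{Int}(S,R_{(\pi)}).$$ $d$-sequence: let $d\in R$ be nonzero and $k$ a positive integer. Let $\pi_1,\ldots,\pi_r$ be a complete list of pairwise non-associate irreducible elements of $R$ dividing $d$. For each $1\le j\le r$ choose a $\pi_j$-sequence $u_{0j},u_{1j},\ldots,u_{kj}$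 of length $k$ in $S$, and let $e_j=v_{\pi_j}\big((u_{kj}-u_{0j})(u_{kj}-u_{1j})\cdots(u_{kj}-u_{k-1,j})\big)$. A $d$-sequence of length $k$ (for $S$) is any sequence $a_0,a_1,\ldots,a_k$ of elements of $R$ satisfying $$a_i\equiv u_{ij}\pmod{\pi_j^{e_j+1}}\quad\text{for all } 0\le i\le k,\ 1\le j\le r.$$ (Such sequences exist by the Chinese remainder theorem; they depend on the choices made, and the $a_i$ need not lie in $S$.) *)

theory Defs
  imports "HOL-Computational_Algebra.Computational_Algebra"
begin

text \<open>R is a UFD (type class {factorial_semiring,idom}), K = 'a fract, the embedding R -> K is to_fract.\<close>

definition IntSR :: "'a::{factorial_semiring,idom} set \<Rightarrow> 'a fract poly set" where
  "IntSR S = {f. \<forall>a\<in>S. poly f (to_fract a) \<in> range to_fract}"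

definition loc_at :: "'a::{factorial_semiring,idom} \<Rightarrow> 'a fract set" where
  "loc_at p = {x. \<exists>a b. b \<noteq> 0 \<and> \<not> p dvd b \<and> x = Fract a b}"

definition IntSloc :: "'a::{factorial_semiring,idom} set \<Rightarrow> 'a \<Rightarrow> 'a fract poly set" where
  "IntSloc S p = {f. \<forall>a\<in>S. poly f (to_fract a) \<in> loc_at p}"

definition pi_seq :: "'a::{factorial_semiring,idom} \<Rightarrow> 'a set \<Rightarrow> nat \<Rightarrow> (nat \<Rightarrow> 'a) \<Rightarrow> bool" where
  "pi_seq p S k u \<longleftrightarrow>
     (\<forall>i\<le>k. u i \<in> S) \<and> inj_on u {0..k} \<and>
     (\<forall>m\<in>{1..k}.
        smult (inverse (\<Prod>i<m. to_fract (u m - u i))) (\<Prod>i<m. [:- to_fract (u i), 1:])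
          \<in> IntSloc S p)"

definition d_seq :: "'a::{factorial_semiring,idom} \<Rightarrow> 'a set \<Rightarrow> nat \<Rightarrow> (nat \<Rightarrow> 'a) \<Rightarrow> bool" where
  "d_seq d S k a \<longleftrightarrow>
     (\<exists>P :: 'a set. \<exists>u :: 'a \<Rightarrow> nat \<Rightarrow> 'a.
        finite P \<and>
        (\<forall>p\<in>P. irreducible p \<and> p dvd d) \<and>
        (\<forall>p\<in>P. \<forall>q\<in>P. p \<noteq> q \<longrightarrow> \<not> (p dvd q \<and> q dvd p)) \<and>
        (\<forall>q. irreducible q \<and> q dvd d \<longrightarrow> (\<exists>p\<in>P. p dvd q \<and> q dvd p)) \<and>
        (\<forall>p\<in>P. pi_seq p S k (u p) \<and>
           (\<forall>i\<le>k. p ^ (multiplicity p (\<Prod>i<k. u p k - u p i) + 1) dvd (a i - u p i))))"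

end

theory Submission
  imports Defs
begin

text \<open>
  An element of the fraction field lies in \<open>R\<close> iff it lies in every localization \<open>R\<^sub>(\<^sub>q\<^sub>)\<close>,
  so both sides can be compared one irreducible \<open>q\<close> at a time. If \<open>q\<close> does not divide \<open>d\<close>,
  every value of \<open>f = g / d'\<close> at a point of \<open>R\<close> lies in \<open>R\<^sub>(\<^sub>q\<^sub>)\<close>. Otherwise \<open>q\<close> is associate
  to some \<open>\<pi>\<close> carrying a \<open>\<pi>\<close>-sequence \<open>u\<close>. Expanding \<open>f\<close> in the Newton basis
  \<open>Q\<^sub>m = \<Prod>i<m. (X - x i) / (x m - x i)\<close> on nodes \<open>x 0, \<dots>, x k'\<close> shows that \<open>f(y)\<close> is
  \<open>\<pi>\<close>-integral once \<open>f\<close> is \<open>\<pi>\<close>-integral at the nodes and the \<open>Q\<^sub>m\<close> are \<open>\<pi>\<close>-integral at the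
  nodes and at \<open>y\<close>. Because \<open>a i \<equiv> u i\<close> modulo \<open>\<pi>\<^bsup>e+1\<^esup>\<close> and \<open>e\<close> bounds the valuation of every
  \<open>u j - u i\<close>, the differences \<open>a j - a i\<close> have the same \<open>\<pi>\<close>-valuations as \<open>u j - u i\<close>; with
  the defining property of \<open>\<pi>\<close>-sequences this makes the Newton basis on either sequence
  \<open>\<pi>\<close>-integral on \<open>S\<close> and at every \<open>a i\<close>. The nodes \<open>u\<close> then carry integrality from \<open>S\<close>
  to the \<open>a i\<close>, and the nodes \<open>a\<close> carry it back.
\<close>

section \<open>Localizations of a factorial ring inside its fraction field\<close>

lemma Fract_mem_loc_at_iff:
  fixes p a b :: "'a::{factorial_semiring,idom}"
  assumes p: "prime_elem p" and "a \<noteq> 0" "b \<noteq> 0"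
  shows "Fract a b \<in> loc_at p \<longleftrightarrow> multiplicity p b \<le> multiplicity p a"
proof
  assume "Fract a b \<in> loc_at p"
  then obtain a' b' where b': "b' \<noteq> 0" "\<not> p dvd b'" and "Fract a b = Fract a' b'"
    unfolding loc_at_def by blast
  then have eq: "a * b' = a' * b" using \<open>b \<noteq> 0\<close> by (simp add: eq_fract)
  then have "a' \<noteq> 0" using assms b' by auto
  have "multiplicity p a + multiplicity p b' = multiplicity p a' + multiplicity p b"
    using arg_cong[OF eq, of "multiplicity p"] assms b' \<open>a' \<noteq> 0\<close>
    by (simp add: prime_elem_multiplicity_mult_distrib)
  moreover have "multiplicity p b' = 0" using b'(2) by (rule not_dvd_imp_multiplicity_0)
  ultimately show "multiplicity p b \<le> multiplicity p a" by linarith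
next
  assume le: "multiplicity p b \<le> multiplicity p a"
  have "\<not> is_unit p" using p by (simp add: prime_elem_def)
  then obtain a' b' where a': "a = p ^ multiplicity p a * a'"
    and b': "b = p ^ multiplicity p b * b'" "\<not> p dvd b'"
    using multiplicity_decompose' assms(2,3) by metis
  have "b' \<noteq> 0" using b' \<open>b \<noteq> 0\<close> by auto
  have "p ^ multiplicity p a = p ^ (multiplicity p a - multiplicity p b) * p ^ multiplicity p b"
    using le by (simp flip: power_add)
  then have "a * b' = (p ^ (multiplicity p a - multiplicity p b) * a') * b"
    by (subst a', subst (2) b'(1)) (simp add: ac_simps)
  then have "Fract a b = Fract (p ^ (multiplicity p a - multiplicity p b) * a') b'"
    using \<open>b \<noteq> 0\<close> \<open>b' \<noteq> 0\<close> by (simp add: eq_fract)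
  then show "Fract a b \<in> loc_at p" unfolding loc_at_def using \<open>b' \<noteq> 0\<close> b'(2) by blast
qed

lemma to_fract_mem_loc_at:
  fixes p :: "'a::{factorial_semiring,idom}"
  assumes "prime_elem p"
  shows "to_fract x \<in> loc_at p"
  unfolding loc_at_def to_fract_def using assms
  by (intro CollectI exI[of _ x] exI[of _ 1]) (auto simp: prime_elem_def)

lemma zero_mem_loc_at:
  fixes p :: "'a::{factorial_semiring,idom}"
  assumes "prime_elem p"
  shows "0 \<in> loc_at p"
  using to_fract_mem_loc_at[OF assms, of 0] by simp

lemma diff_mem_loc_at:
  fixes p :: "'a::{factorial_semiring,idom}"
  assumes "prime_elem p" "x \<in> loc_at p" "y \<in> loc_at p"
  shows "x - y \<in> loc_at p"
proof -
  obtain a b c e where "b \<noteq> 0" "\<not> p dvd b" "x = Fract a b" "e \<noteq> 0" "\<not> p dvd e" "y = Fract c e"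
    using assms(2,3) unfolding loc_at_def by blast
  then show ?thesis unfolding loc_at_def using assms(1)
    by (intro CollectI exI[of _ "a * e - c * b"] exI[of _ "b * e"])
      (auto dest: prime_elem_dvd_multD)
qed

lemma mult_mem_loc_at:
  fixes p :: "'a::{factorial_semiring,idom}"
  assumes "prime_elem p" "x \<in> loc_at p" "y \<in> loc_at p"
  shows "x * y \<in> loc_at p"
proof -
  obtain a b c e where "b \<noteq> 0" "\<not> p dvd b" "x = Fract a b" "e \<noteq> 0" "\<not> p dvd e" "y = Fract c e"
    using assms(2,3) unfolding loc_at_def by blast
  then show ?thesis unfolding loc_at_def using assms(1)
    by (intro CollectI exI[of _ "a * c"] exI[of _ "b * e"]) (auto dest: prime_elem_dvd_multD)
qed

lemma loc_at_eq_if_associated: "p dvd q \<Longrightarrow> q dvd p \<Longrightarrow> loc_at q = loc_at p"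
  unfolding loc_at_def using dvd_trans by blast

lemma range_to_fract_iff_mem_loc_at:
  fixes x :: "'a::{factorial_semiring,idom} fract"
  shows "x \<in> range to_fract \<longleftrightarrow> (\<forall>q. irreducible q \<longrightarrow> x \<in> loc_at q)"
proof (intro iffI allI impI)
  show "x \<in> loc_at q" if "x \<in> range to_fract" "irreducible q" for q
    using that to_fract_mem_loc_at by (auto simp: prime_elem_iff_irreducible)
next
  assume loc: "\<forall>q. irreducible q \<longrightarrow> x \<in> loc_at q"
  obtain a b where x: "x = Fract a b" and "b \<noteq> 0" by (cases x)
  have "b dvd a"
  proof (cases "a = 0")
    case False
    show ?thesis
    proof (rule multiplicity_le_imp_dvd[OF \<open>b \<noteq> 0\<close>])
      fix q :: 'a
      assume "prime q"
      then show "multiplicity q b \<le> multiplicity q a"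
        using loc Fract_mem_loc_at_iff[of q a b] False \<open>b \<noteq> 0\<close> x
        by (auto simp: prime_elem_iff_irreducible)
    qed
  qed simp
  then obtain c where "a = b * c" by blast
  then have "x = to_fract c" using x \<open>b \<noteq> 0\<close> by (simp add: to_fract_def eq_fract)
  then show "x \<in> range to_fract" by blast
qed

lemma IntSR_iff_IntSloc: "f \<in> IntSR S \<longleftrightarrow> (\<forall>q. irreducible q \<longrightarrow> f \<in> IntSloc S q)"
  by (auto simp: IntSR_def IntSloc_def range_to_fract_iff_mem_loc_at)

lemma to_fract_prod: "to_fract (prod f A) = (\<Prod>x\<in>A. to_fract (f x))"
  by (induction A rule: infinite_finite_induct) simp_all

lemma poly_map_poly_to_fract: "poly (map_poly to_fract g) (to_fract y) = to_fract (poly g y)"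
  by (induction g) (auto simp: map_poly_pCons)

lemma poly_fraction_mem_loc_at:
  fixes p c :: "'a::{factorial_semiring,idom}"
  assumes "c \<noteq> 0" "\<not> p dvd c"
  shows "poly (smult (inverse (to_fract c)) (map_poly to_fract g)) (to_fract y) \<in> loc_at p"
proof -
  have "poly (smult (inverse (to_fract c)) (map_poly to_fract g)) (to_fract y) = Fract (poly g y) c"
    by (simp add: poly_map_poly_to_fract Fract_conv_to_fract divide_inverse mult.commute)
  then show ?thesis unfolding loc_at_def using assms by blast
qed

section \<open>Newton interpolation\<close>

lemma newton_form_exists:
  fixes f :: "'k::field poly"
  assumes "degree f \<le> n"
  shows "\<exists>c. f = (\<Sum>m\<le>n. smult (c m) (\<Prod>i<m. [:- x i, 1:]))"
  using assms
proof (induction n arbitrary: f x)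
  case 0
  then have "f = [:coeff f 0:]" by (metis degree_0_id le_zero_eq)
  then show ?case by (intro exI[of _ "\<lambda>_. coeff f 0"]) simp
next
  case (Suc n)
  define q where "q = synthetic_div f (x 0)"
  have f: "f = [:- x 0, 1:] * q + [:poly f (x 0):]"
    unfolding q_def using synthetic_div_correct'[of "x 0" f] by simp
  have "degree q \<le> n" using Suc.prems by (simp add: q_def degree_synthetic_div)
  from Suc.IH[OF this, of "\<lambda>i. x (Suc i)"] obtain c
    where c: "q = (\<Sum>m\<le>n. smult (c m) (\<Prod>i<m. [:- x (Suc i), 1:]))" by blast
  define c' where "c' m = (case m of 0 \<Rightarrow> poly f (x 0) | Suc m' \<Rightarrow> c m')" for m
  have "(\<Sum>m\<le>Suc n. smult (c' m) (\<Prod>i<m. [:- x i, 1:]))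
      = [:poly f (x 0):] + (\<Sum>m\<le>n. smult (c m) (\<Prod>i<Suc m. [:- x i, 1:]))"
    by (subst sum.atMost_Suc_shift) (simp add: c'_def)
  also have "(\<Sum>m\<le>n. smult (c m) (\<Prod>i<Suc m. [:- x i, 1:])) = [:- x 0, 1:] * q"
    unfolding c by (simp only: prod.lessThan_Suc_shift sum_distrib_left mult_smult_right)
  finally show ?case using f by (intro exI[of _ c']) (simp add: add.commute)
qed

definition newton_basis :: "(nat \<Rightarrow> 'k::field) \<Rightarrow> nat \<Rightarrow> 'k poly" where
  "newton_basis x m = smult (inverse (\<Prod>i<m. x m - x i)) (\<Prod>i<m. [:- x i, 1:])"

lemma poly_newton_basis:
  "poly (newton_basis x m) z = inverse (\<Prod>i<m. x m - x i) * (\<Prod>i<m. z - x i)"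
  by (simp add: newton_basis_def poly_prod)

lemma newton_interpolation_mem:
  fixes f :: "'k::field poly" and L :: "'k set"
  assumes L0: "0 \<in> L" and L_diff: "\<And>a b. a \<in> L \<Longrightarrow> b \<in> L \<Longrightarrow> a - b \<in> L"
    and L_mult: "\<And>a b. a \<in> L \<Longrightarrow> b \<in> L \<Longrightarrow> a * b \<in> L"
    and inj: "inj_on x {..n}" and deg: "degree f \<le> n"
    and f_nodes: "\<And>j. j \<le> n \<Longrightarrow> poly f (x j) \<in> L"
    and basis_nodes: "\<And>j m. j \<le> n \<Longrightarrow> m < j \<Longrightarrow> poly (newton_basis x m) (x j) \<in> L"
    and basis_y: "\<And>m. m \<le> n \<Longrightarrow> poly (newton_basis x m) y \<in> L"
  shows "poly f y \<in> L"
proof -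
  have L_sum: "sum g A \<in> L" if "\<And>i. i \<in> A \<Longrightarrow> g i \<in> L" for g and A :: "nat set"
    using that
  proof (induction A rule: infinite_finite_induct)
    case (insert a A)
    then have "g a - (0 - sum g A) \<in> L" by (intro L_diff L0) auto
    then show ?case using insert.hyps by simp
  qed (use L0 in auto)
  have denom_nz: "(\<Prod>i<m. x m - x i) \<noteq> 0" if "m \<le> n" for m
    using inj that by (auto simp: inj_on_def) (metis atMost_iff less_imp_le less_irrefl order.trans)
  obtain c where c: "f = (\<Sum>m\<le>n. smult (c m) (\<Prod>i<m. [:- x i, 1:]))"
    using newton_form_exists[OF deg] by blast
  define c' where "c' m = c m * (\<Prod>i<m. x m - x i)" for m
  have f: "f = (\<Sum>m\<le>n. smult (c' m) (newton_basis x m))" unfolding c c'_def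
    by (intro sum.cong refl) (simp add: newton_basis_def mult.assoc right_inverse[OF denom_nz])
  have poly_f: "poly f z = (\<Sum>m\<le>n. c' m * poly (newton_basis x m) z)" for z
    by (simp add: f poly_sum)
  have coeff_mem: "c' j \<in> L" if "j \<le> n" for j
    using that
  proof (induction j rule: less_induct)
    case (less j)
    have "{..n} = {..<j} \<union> {j} \<union> {j<..n}" using less.prems by auto
    then have "poly f (x j) = (\<Sum>m<j. c' m * poly (newton_basis x m) (x j))
        + c' j * poly (newton_basis x j) (x j) + (\<Sum>m\<in>{j<..n}. c' m * poly (newton_basis x m) (x j))"
      unfolding poly_f by (simp add: sum.union_disjoint) (subst sum.union_disjoint; auto)
    also have "(\<Sum>m\<in>{j<..n}. c' m * poly (newton_basis x m) (x j)) = 0"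
      by (intro sum.neutral) (auto simp: poly_newton_basis)
    also have "poly (newton_basis x j) (x j) = 1"
      using denom_nz[OF less.prems] by (simp add: poly_newton_basis)
    finally have "c' j = poly f (x j) - (\<Sum>m<j. c' m * poly (newton_basis x m) (x j))"
      by simp
    also have "\<dots> \<in> L"
      using less.prems by (intro L_diff f_nodes L_sum L_mult less.IH basis_nodes) auto
    finally show ?case .
  qed
  show ?thesis unfolding poly_f by (intro L_sum L_mult coeff_mem basis_y) auto
qed

section \<open>Valuations of congruent elements\<close>

lemma min_sum_le_sum_min: "min (sum f A) (c::nat) \<le> (\<Sum>i\<in>A. min (f i) c)"
proof (induction A rule: infinite_finite_induct)
  case (insert a A)
  then show ?case by (simp add: min_def split: if_splits)
qed auto

lemma multiplicity_min_le_if_dvd_diff: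
  fixes p x y :: "'a::{factorial_semiring,idom}"
  assumes "prime_elem p" "p ^ c dvd y - x" "y \<noteq> 0"
  shows "min (multiplicity p x) c \<le> multiplicity p y"
proof -
  have "p ^ min (multiplicity p x) c dvd x"
    by (rule dvd_trans[OF le_imp_power_dvd multiplicity_dvd]) simp
  moreover have "p ^ min (multiplicity p x) c dvd y - x"
    by (rule dvd_trans[OF le_imp_power_dvd assms(2)]) simp
  ultimately have "p ^ min (multiplicity p x) c dvd x + (y - x)" by (rule dvd_add)
  then show ?thesis using assms(1,3) by (simp add: power_dvd_iff_le_multiplicity prime_elem_def)
qed

lemma multiplicity_eq_if_dvd_diff:
  fixes p x y :: "'a::{factorial_semiring,idom}"
  assumes p: "prime_elem p" and dvd: "p ^ (e + 1) dvd y - x"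
    and "multiplicity p x \<le> e" "x \<noteq> 0"
  shows "y \<noteq> 0 \<and> multiplicity p y = multiplicity p x"
proof -
  have not_unit: "\<not> is_unit p" using p by (simp add: prime_elem_def)
  have x_not_dvd: "\<not> p ^ (multiplicity p x + 1) dvd x"
    by (simp only: power_dvd_iff_le_multiplicity[OF \<open>x \<noteq> 0\<close> not_unit])
  have dvd': "p ^ (multiplicity p x + 1) dvd y - x"
    by (rule dvd_trans[OF le_imp_power_dvd dvd]) (simp add: assms(3))
  show ?thesis
  proof (intro conjI antisym)
    show "y \<noteq> 0" using dvd' x_not_dvd by auto
    then show "multiplicity p x \<le> multiplicity p y"
      using multiplicity_min_le_if_dvd_diff[OF p dvd] assms(3) by simp
    show "multiplicity p y \<le> multiplicity p x"
    proof (rule ccontr)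
      assume "\<not> ?thesis"
      then have "p ^ (multiplicity p x + 1) dvd y" by (intro multiplicity_dvd') simp
      then have "p ^ (multiplicity p x + 1) dvd y - (y - x)" using dvd' by (rule dvd_diff)
      then show False using x_not_dvd by simp
    qed
  qed
qed

section \<open>Newton bases attached to \<open>\<pi>\<close>-sequences\<close>

text \<open>\<open>denom_multiplicity \<pi> u k\<close> is the exponent \<open>e\<close> in the definition of \<open>d\<close>-sequences.\<close>

definition denom_multiplicity :: "'a::{factorial_semiring,idom} \<Rightarrow> (nat \<Rightarrow> 'a) \<Rightarrow> nat \<Rightarrow> nat"
  where "denom_multiplicity p u m = multiplicity p (\<Prod>i<m. u m - u i)"

context
  fixes p :: "'a::{factorial_semiring,idom}" and S k u
  assumes p_prime: "prime_elem p" and u_pi_seq: "pi_seq p S k u"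
begin

lemma pi_seq_mem: "i \<le> k \<Longrightarrow> u i \<in> S"
  using u_pi_seq by (auto simp: pi_seq_def)

lemma pi_seq_diff_nonzero: "i < j \<Longrightarrow> j \<le> k \<Longrightarrow> u j - u i \<noteq> 0"
  using u_pi_seq unfolding pi_seq_def inj_on_def
  by (metis atLeastAtMost_iff eq_iff_diff_eq_0 le0 less_imp_le less_irrefl order.trans)

lemma denom_multiplicity_eq_sum:
  "m \<le> k \<Longrightarrow> denom_multiplicity p u m = (\<Sum>i<m. multiplicity p (u m - u i))"
  unfolding denom_multiplicity_def
  by (rule prime_elem_multiplicity_prod_distrib[OF p_prime]) (auto dest: pi_seq_diff_nonzero)

lemma denom_multiplicity_le_at_mem:
  assumes "s \<in> S" "1 \<le> m" "m \<le> k" "\<And>i. i < m \<Longrightarrow> s \<noteq> u i"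
  shows "denom_multiplicity p u m \<le> (\<Sum>i<m. multiplicity p (s - u i))"
proof -
  have "smult (inverse (\<Prod>i<m. to_fract (u m - u i))) (\<Prod>i<m. [:- to_fract (u i), 1:])
      \<in> IntSloc S p"
    using u_pi_seq assms(2,3) by (auto simp: pi_seq_def)
  then have "Fract (\<Prod>i<m. s - u i) (\<Prod>i<m. u m - u i) \<in> loc_at p"
    using \<open>s \<in> S\<close> by (simp add: IntSloc_def poly_prod Fract_conv_to_fract to_fract_prod
        divide_inverse mult.commute)
  then have "multiplicity p (\<Prod>i<m. u m - u i) \<le> multiplicity p (\<Prod>i<m. s - u i)"
    using assms pi_seq_diff_nonzero by (subst (asm) Fract_mem_loc_at_iff[OF p_prime]) auto
  then show ?thesis unfolding denom_multiplicity_def using assms(4)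
    by (subst (asm) prime_elem_multiplicity_prod_distrib[OF p_prime]) auto
qed

lemma denom_multiplicity_le_last: "m \<le> k \<Longrightarrow> denom_multiplicity p u m \<le> denom_multiplicity p u k"
proof (cases "m = 0 \<or> m = k")
  case False
  assume "m \<le> k"
  have "u k \<noteq> u i" if "i < m" for i
    using pi_seq_diff_nonzero[of i k] that \<open>m \<le> k\<close> False by auto
  then have "denom_multiplicity p u m \<le> (\<Sum>i<m. multiplicity p (u k - u i))"
    using False \<open>m \<le> k\<close> by (intro denom_multiplicity_le_at_mem pi_seq_mem) auto
  also have "\<dots> \<le> (\<Sum>i<k. multiplicity p (u k - u i))"
    using \<open>m \<le> k\<close> by (intro sum_mono2) auto
  finally show ?thesis by (simp add: denom_multiplicity_eq_sum)
qed (auto simp: denom_multiplicity_def)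

lemma multiplicity_diff_le_denom_multiplicity:
  assumes "i < j" "j \<le> k"
  shows "multiplicity p (u j - u i) \<le> denom_multiplicity p u k"
proof -
  have "multiplicity p (u j - u i) \<le> (\<Sum>i<j. multiplicity p (u j - u i))"
    using assms by (intro member_le_sum) auto
  also have "\<dots> \<le> denom_multiplicity p u k"
    using assms denom_multiplicity_le_last by (simp flip: denom_multiplicity_eq_sum)
  finally show ?thesis .
qed

lemma multiplicity_diff_congruent:
  assumes b: "\<And>i. i \<le> j \<Longrightarrow> p ^ (denom_multiplicity p u k + 1) dvd b i - u i"
    and "i < j" "j \<le> k"
  shows "b j - b i \<noteq> 0 \<and> multiplicity p (b j - b i) = multiplicity p (u j - u i)"
proof (rule multiplicity_eq_if_dvd_diff[OF p_prime])
  have "p ^ (denom_multiplicity p u k + 1) dvd (b j - u j) - (b i - u i)"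
    using assms by (intro dvd_diff b) auto
  then show "p ^ (denom_multiplicity p u k + 1) dvd (b j - b i) - (u j - u i)"
    by (simp add: algebra_simps)
qed (use assms multiplicity_diff_le_denom_multiplicity pi_seq_diff_nonzero in auto)

lemma inj_on_congruent:
  assumes b: "\<And>i. i \<le> n \<Longrightarrow> p ^ (denom_multiplicity p u k + 1) dvd b i - u i" and "n \<le> k"
  shows "inj_on (\<lambda>i. to_fract (b i)) {..n}"
proof (rule inj_onI)
  fix i j
  assume ij: "i \<in> {..n}" "j \<in> {..n}" "to_fract (b i) = to_fract (b j)"
  show "i = j"
  proof (rule ccontr)
    assume "i \<noteq> j"
    then consider "i < j" | "j < i" by linarith
    then show False
      using multiplicity_diff_congruent[of j b i] multiplicity_diff_congruent[of i b j] b ij \<open>n \<le> k\<close>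
      by cases auto
  qed
qed

lemma denom_multiplicity_le_at_congruent:
  assumes b: "\<And>i. i < m \<Longrightarrow> p ^ (denom_multiplicity p u k + 1) dvd b i - u i"
    and "s \<in> S" and xs: "p ^ (denom_multiplicity p u k + 1) dvd x - s" and "m \<le> k"
    and nz: "(\<Prod>i<m. x - b i) \<noteq> 0"
  shows "denom_multiplicity p u m \<le> (\<Sum>i<m. multiplicity p (x - b i))"
proof -
  let ?e = "denom_multiplicity p u k"
  have dvd: "p ^ (?e + 1) dvd (x - b i) - (s - u i)" if "i < m" for i
  proof -
    have "p ^ (?e + 1) dvd (x - s) - (b i - u i)" using that by (intro dvd_diff xs b)
    then show ?thesis by (simp add: algebra_simps)
  qed
  show ?thesis
  proof (cases "\<exists>j<m. s = u j")
    case True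
    then obtain j where "j < m" "s = u j" by blast
    then have "p ^ (?e + 1) dvd x - b j" using dvd[of j] by simp
    moreover have "x - b j \<noteq> 0" using nz \<open>j < m\<close> by auto
    ultimately have "?e + 1 \<le> multiplicity p (x - b j)"
      using p_prime by (intro multiplicity_geI) (auto simp: prime_elem_def)
    also have "\<dots> \<le> (\<Sum>i<m. multiplicity p (x - b i))"
      using \<open>j < m\<close> by (intro member_le_sum) auto
    finally show ?thesis using denom_multiplicity_le_last[OF \<open>m \<le> k\<close>] by simp
  next
    case False
    show ?thesis
    proof (cases "m = 0")
      case False
      with \<open>\<not> (\<exists>j<m. s = u j)\<close> have "denom_multiplicity p u m \<le> (\<Sum>i<m. multiplicity p (s - u i))"
        using \<open>s \<in> S\<close> \<open>m \<le> k\<close> by (intro denom_multiplicity_le_at_mem) auto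
      then have "denom_multiplicity p u m \<le> min (\<Sum>i<m. multiplicity p (s - u i)) (?e + 1)"
        using denom_multiplicity_le_last[OF \<open>m \<le> k\<close>] by simp
      also have "\<dots> \<le> (\<Sum>i<m. min (multiplicity p (s - u i)) (?e + 1))"
        by (rule min_sum_le_sum_min)
      also have "\<dots> \<le> (\<Sum>i<m. multiplicity p (x - b i))"
        using nz dvd by (intro sum_mono multiplicity_min_le_if_dvd_diff[OF p_prime]) auto
      finally show ?thesis .
    qed (simp add: denom_multiplicity_def)
  qed
qed

lemma newton_basis_congruent_mem_loc_at:
  assumes b: "\<And>i. i \<le> m \<Longrightarrow> p ^ (denom_multiplicity p u k + 1) dvd b i - u i"
    and "s \<in> S" and xs: "p ^ (denom_multiplicity p u k + 1) dvd x - s" and "m \<le> k"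
  shows "poly (newton_basis (\<lambda>i. to_fract (b i)) m) (to_fract x) \<in> loc_at p"
proof -
  have eq: "poly (newton_basis (\<lambda>i. to_fract (b i)) m) (to_fract x)
      = Fract (\<Prod>i<m. x - b i) (\<Prod>i<m. b m - b i)"
    by (simp add: poly_newton_basis Fract_conv_to_fract to_fract_prod divide_inverse mult.commute)
  have b_diff: "b m - b i \<noteq> 0 \<and> multiplicity p (b m - b i) = multiplicity p (u m - u i)"
    if "i < m" for i
    using multiplicity_diff_congruent[of m b i] b that \<open>m \<le> k\<close> by auto
  then have denom_mult: "multiplicity p (\<Prod>i<m. b m - b i) = denom_multiplicity p u m"
    using \<open>m \<le> k\<close>
    by (subst prime_elem_multiplicity_prod_distrib[OF p_prime]) (auto simp: denom_multiplicity_eq_sum)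
  show ?thesis
  proof (cases "(\<Prod>i<m. x - b i) = 0")
    case True
    show ?thesis unfolding eq True fract_collapse(1) by (rule zero_mem_loc_at[OF p_prime])
  next
    case False
    then have "denom_multiplicity p u m \<le> multiplicity p (\<Prod>i<m. x - b i)"
      using denom_multiplicity_le_at_congruent[OF _ \<open>s \<in> S\<close> xs \<open>m \<le> k\<close> False] b
      by (subst prime_elem_multiplicity_prod_distrib[OF p_prime]) auto
    then show ?thesis unfolding eq
      using b_diff False denom_mult by (subst Fract_mem_loc_at_iff[OF p_prime]) auto
  qed
qed

lemma IntSloc_iff_values_at_congruent:
  assumes a: "\<And>i. i \<le> n \<Longrightarrow> p ^ (denom_multiplicity p u k + 1) dvd a i - u i"
    and "degree f \<le> n" "n \<le> k"
  shows "f \<in> IntSloc S p \<longleftrightarrow> (\<forall>i\<le>n. poly f (to_fract (a i)) \<in> loc_at p)"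
proof (intro iffI allI impI)
  fix i
  assume "f \<in> IntSloc S p" "i \<le> n"
  show "poly f (to_fract (a i)) \<in> loc_at p"
  proof (rule newton_interpolation_mem[OF zero_mem_loc_at[OF p_prime]
        diff_mem_loc_at[OF p_prime] mult_mem_loc_at[OF p_prime] _ \<open>degree f \<le> n\<close>])
    show "inj_on (\<lambda>j. to_fract (u j)) {..n}" using \<open>n \<le> k\<close> by (intro inj_on_congruent) auto
  next
    fix j
    assume "j \<le> n"
    then show "poly f (to_fract (u j)) \<in> loc_at p"
      using \<open>f \<in> IntSloc S p\<close> \<open>n \<le> k\<close> pi_seq_mem by (auto simp: IntSloc_def)
  next
    fix j m
    assume "j \<le> n" "m < j"
    then show "poly (newton_basis (\<lambda>j. to_fract (u j)) m) (to_fract (u j)) \<in> loc_at p"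
      using \<open>n \<le> k\<close> by (intro newton_basis_congruent_mem_loc_at[of m u "u j"] pi_seq_mem) auto
  next
    fix m
    assume "m \<le> n"
    then show "poly (newton_basis (\<lambda>j. to_fract (u j)) m) (to_fract (a i)) \<in> loc_at p"
      using \<open>n \<le> k\<close> \<open>i \<le> n\<close> a
      by (intro newton_basis_congruent_mem_loc_at[of m u "u i"] pi_seq_mem) auto
  qed
next
  assume a_values: "\<forall>i\<le>n. poly f (to_fract (a i)) \<in> loc_at p"
  have "poly f (to_fract s) \<in> loc_at p" if "s \<in> S" for s
  proof (rule newton_interpolation_mem[OF zero_mem_loc_at[OF p_prime]
        diff_mem_loc_at[OF p_prime] mult_mem_loc_at[OF p_prime] _ \<open>degree f \<le> n\<close>])
    show "inj_on (\<lambda>j. to_fract (a j)) {..n}" using a \<open>n \<le> k\<close> by (rule inj_on_congruent)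
  next
    fix j m
    assume "j \<le> n" "m < j"
    then show "poly (newton_basis (\<lambda>j. to_fract (a j)) m) (to_fract (a j)) \<in> loc_at p"
      using \<open>n \<le> k\<close> a by (intro newton_basis_congruent_mem_loc_at[of m a "u j"] pi_seq_mem) auto
  next
    fix m
    assume "m \<le> n"
    then show "poly (newton_basis (\<lambda>j. to_fract (a j)) m) (to_fract s) \<in> loc_at p"
      using \<open>n \<le> k\<close> a \<open>s \<in> S\<close> by (intro newton_basis_congruent_mem_loc_at[of m a s]) auto
  qed (use a_values in auto)
  then show "f \<in> IntSloc S p" by (simp add: IntSloc_def)
qed

end

lemma d_seqE:
  assumes "d_seq d S k a"
  obtains P u where "\<And>p. p \<in> P \<Longrightarrow> irreducible p"
    and "\<And>q. irreducible q \<Longrightarrow> q dvd d \<Longrightarrow> \<exists>p\<in>P. p dvd q \<and> q dvd p"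
    and "\<And>p. p \<in> P \<Longrightarrow> pi_seq p S k (u p)"
    and "\<And>p i. p \<in> P \<Longrightarrow> i \<le> k \<Longrightarrow> p ^ (denom_multiplicity p (u p) k + 1) dvd a i - u p i"
proof -
  from assms[unfolded d_seq_def] obtain P :: "'a set" and u where
    "finite P" "\<forall>p\<in>P. irreducible p \<and> p dvd d"
    "\<forall>p\<in>P. \<forall>q\<in>P. p \<noteq> q \<longrightarrow> \<not> (p dvd q \<and> q dvd p)"
    "\<forall>q. irreducible q \<and> q dvd d \<longrightarrow> (\<exists>p\<in>P. p dvd q \<and> q dvd p)"
    "\<forall>p\<in>P. pi_seq p S k (u p) \<and>
      (\<forall>i\<le>k. p ^ (multiplicity p (\<Prod>i<k. u p k - u p i) + 1) dvd (a i - u p i))"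
    by (elim exE conjE)
  then show thesis by (intro that[of P u]) (auto simp: denom_multiplicity_def)
qed

theorem lemma4p1:
  fixes S :: "'a::{factorial_semiring,idom} set" and d :: 'a and k k' :: nat
    and a :: "nat \<Rightarrow> 'a" and f :: "'a fract poly"
  assumes "S \<noteq> {}" and "d \<noteq> 0" and "k > 0"
    and "d_seq d S k a"
    and "degree f = k'" and "k' \<le> k"
    and "\<exists>g :: 'a poly. \<exists>d' :: 'a. d' \<noteq> 0 \<and> d' dvd d \<and>
           f = smult (inverse (to_fract d')) (map_poly to_fract g)"
  shows "f \<in> IntSR S \<longleftrightarrow> (\<forall>i\<le>k'. poly f (to_fract (a i)) \<in> range to_fract)"
proof -
  obtain P u where P_irr: "\<And>p. p \<in> P \<Longrightarrow> irreducible p"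
    and P_cover: "\<And>q. irreducible q \<Longrightarrow> q dvd d \<Longrightarrow> \<exists>p\<in>P. p dvd q \<and> q dvd p"
    and u_seq: "\<And>p. p \<in> P \<Longrightarrow> pi_seq p S k (u p)"
    and a_cong: "\<And>p i. p \<in> P \<Longrightarrow> i \<le> k \<Longrightarrow>
      p ^ (denom_multiplicity p (u p) k + 1) dvd a i - u p i"
    using assms(4) by (rule d_seqE) iprover
  obtain g d' where "d' \<noteq> 0" "d' dvd d"
    and f: "f = smult (inverse (to_fract d')) (map_poly to_fract g)"
    using assms(7) by blast
  have "f \<in> IntSloc S q \<longleftrightarrow> (\<forall>i\<le>k'. poly f (to_fract (a i)) \<in> loc_at q)"
    if q_irr: "irreducible q" for q
  proof (cases "q dvd d")
    case False
    then have "\<not> q dvd d'" using \<open>d' dvd d\<close> dvd_trans by blast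
    have "poly f (to_fract y) \<in> loc_at q" for y
      unfolding f using \<open>d' \<noteq> 0\<close> \<open>\<not> q dvd d'\<close> by (rule poly_fraction_mem_loc_at)
    then show ?thesis by (simp add: IntSloc_def)
  next
    case True
    then obtain p where p: "p \<in> P" "p dvd q" "q dvd p" using P_cover q_irr by blast
    then have "prime_elem p" using P_irr by (simp add: prime_elem_iff_irreducible)
    then have "f \<in> IntSloc S p \<longleftrightarrow> (\<forall>i\<le>k'. poly f (to_fract (a i)) \<in> loc_at p)"
      using u_seq[OF p(1)] by (rule IntSloc_iff_values_at_congruent)
        (use a_cong[OF p(1)] assms(5,6) in auto)
    moreover have "loc_at q = loc_at p" using p(2,3) by (rule loc_at_eq_if_associated)
    ultimately show ?thesis by (simp add: IntSloc_def)
  qed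
  then show ?thesis by (auto simp: IntSR_iff_IntSloc range_to_fract_iff_mem_loc_at)
qed

end
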